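(* Let $\beta\in (0,1)$. Then for every sufficiently large integer $n$ and every $t\in\mathbb{N}$ with $t\leq 0.1\log_2(n)$ the following holds. Suppose $G$ is a graph on $n$ vertices such that for every set $A\subseteq V(G)$ of $t$ vertices we are given a set $Y_A\subseteq N_G[A]$ with $|Y_A|\geq \beta n$. Then in the Waiter-Client game on $G$, Waiter has a strategy such that at the end of the game Client's graph $C$ satisfies $|N_C[A]\cap Y_A| \geq \frac{\beta n}{200^{t+1}}$ for every $A\subseteq V(G)$ with $|A|=t$.
   Context: For a graph $H$ and $A\subseteq V(H)$, $N_H[A]:=\left(\bigcap_{v\in A} N_H(v)\right)\setminus A$ is the set of common neighbors of $A$. The Waiter-Client game on $G$: in each round Waiter offers two unclaimed edges of $G$, Client keeps one (it joins Client's graph $C$ on vertex set $V(G)$) and the other goes to Waiter; if one unclaimed edge remains in the final round it goes to Waiter. *)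

theory Defs
  imports Main "HOL-Library.Log_Nat" Complex_Main
begin

definition simple_graph :: "'a set \<Rightarrow> 'a set set \<Rightarrow> bool" where
  "simple_graph V E \<longleftrightarrow> finite V \<and>
     (\<forall>e\<in>E. \<exists>u v. u \<noteq> v \<and> u \<in> V \<and> v \<in> V \<and> e = {u, v})"

definition nbhd :: "'a set \<Rightarrow> 'a set set \<Rightarrow> 'a \<Rightarrow> 'a set" where
  "nbhd V H v = {u \<in> V. {u, v} \<in> H}"

definition common_nbhd :: "'a set \<Rightarrow> 'a set set \<Rightarrow> 'a set \<Rightarrow> 'a set" where
  "common_nbhd V H A = {u \<in> V. \<forall>v\<in>A. u \<in> nbhd V H v} - A"

text \<open>Waiter-Client game: state = (unclaimed edges U, Client's edges C).
  While at least two edges are unclaimed Waiter offers two distinct ones and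
  Client keeps either; when at most one remains, it goes to Waiter and the game ends.\<close>
inductive waiter_wins :: "('a set set \<Rightarrow> bool) \<Rightarrow> 'a set set \<Rightarrow> 'a set set \<Rightarrow> bool"
  for P where
  final: "finite U \<Longrightarrow> card U \<le> 1 \<Longrightarrow> P C \<Longrightarrow> waiter_wins P U C"
| offer: "e1 \<in> U \<Longrightarrow> e2 \<in> U \<Longrightarrow> e1 \<noteq> e2 \<Longrightarrow>
          waiter_wins P (U - {e1, e2}) (insert e1 C) \<Longrightarrow>
          waiter_wins P (U - {e1, e2}) (insert e2 C) \<Longrightarrow>
          waiter_wins P U C"

end

theory Submission
  imports Defs "HOL-Analysis.Convex" "HOL-Real_Asymp.Real_Asymp"
begin

(*
  Waiter plays against a potential in the style of Erdos-Selfridge and Beck.  For a t-set A and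
  y in Y A, Client gets y into N_C[A] iff he claims the whole star {ya : a in A}.  Under random
  play from the current position this star ends up in Client's graph with probability p = 2^-u,
  u the number of its unclaimed edges (p = 0 once Waiter owns one of its edges); hence if X_A is
  the number of completed stars of A, then E[2^-X_A] = prod_y (1 - p_y / 2).  The potential
  Phi = sum_A 2^(k+2) prod_y (1 - p_y / 2) with k = beta n / 200^(t+1) is at most
  n^t 2^(k+2) exp(-2^-(t+1) beta n) at the start, and at the end it exceeds 1 as soon as some A
  has fewer than k completed stars.  When Waiter offers e1, e2, Phi grows by at most
  |gamma(e1) - gamma(e2)| + kappa(e1, e2), where gamma is the first-order effect of an edge and
  kappa the joint effect of two edges of one star.  The kappa's of all pairs sum to at most n Phi,
  so sorting the M unclaimed edges into about M / sqrt n buckets by gamma yields an offer costing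
  a factor 1 + O(sqrt n / M).  Over the whole game this is exp(O(sqrt n log n)), negligible
  against 2^-(t+1) beta n >= beta n^0.9 / 2 when t <= 0.1 log2 n.
*)

lemma waiter_wins_invariant:
  assumes step: "\<And>U C. I U C \<Longrightarrow> finite U \<Longrightarrow> 2 \<le> card U \<Longrightarrow>
      \<exists>e1\<in>U. \<exists>e2\<in>U. e1 \<noteq> e2 \<and> I (U - {e1, e2}) (insert e1 C) \<and> I (U - {e1, e2}) (insert e2 C)"
    and final: "\<And>U C. I U C \<Longrightarrow> finite U \<Longrightarrow> card U \<le> 1 \<Longrightarrow> P C"
    and "finite U" and "I U C"
  shows "waiter_wins P U C"
  using \<open>finite U\<close> \<open>I U C\<close>
proof (induction "card U" arbitrary: U C rule: less_induct)
  case less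
  show ?case
  proof (cases "card U \<le> 1")
    case True
    then show ?thesis using less.prems final by (blast intro: waiter_wins.final)
  next
    case False
    then obtain e1 e2 where e: "e1 \<in> U" "e2 \<in> U" "e1 \<noteq> e2"
      and I: "I (U - {e1, e2}) (insert e1 C)" "I (U - {e1, e2}) (insert e2 C)"
      using step[OF less.prems(2,1)] by force
    have "card (U - {e1, e2}) < card U"
      using e less.prems(1) by (intro psubset_card_mono) auto
    with less.hyps less.prems(1) I show ?thesis
      by (intro waiter_wins.offer[OF e]) auto
  qed
qed

section \<open>Counting and pigeonhole\<close>

lemma mult_pred_le_two_power: "n * (n - 1) \<le> (2::nat) ^ n"
proof (induction n)
  case (Suc n)
  show ?case
  proof (cases "n \<le> 2")
    case True
    then have "n = 0 \<or> n = 1 \<or> n = 2" by auto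
    then show ?thesis by auto
  next
    case False
    then obtain m where "n = m + 3" by (intro that[of "n - 3"]) simp
    then have "Suc n * (Suc n - 1) \<le> 2 * (n * (n - 1))" by (simp add: algebra_simps)
    also have "\<dots> \<le> 2 * 2 ^ n" using Suc by simp
    finally show ?thesis by simp
  qed
qed simp

lemma prod_one_plus_if_single:
  fixes r :: "'a \<Rightarrow> 'b::comm_ring_1"
  assumes "finite S" and single: "\<And>y y'. y \<in> S \<Longrightarrow> y' \<in> S \<Longrightarrow> r y \<noteq> 0 \<Longrightarrow> r y' \<noteq> 0 \<Longrightarrow> y = y'"
  shows "(\<Prod>y\<in>S. 1 + r y) = 1 + (\<Sum>y\<in>S. r y)"
proof (cases "\<exists>y0\<in>S. r y0 \<noteq> 0")
  case True
  then obtain y0 where y0: "y0 \<in> S" "r y0 \<noteq> 0" by blast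
  then have rest: "\<And>y. y \<in> S - {y0} \<Longrightarrow> r y = 0" using single by blast
  have "(\<Prod>y\<in>S. 1 + r y) = (1 + r y0) * (\<Prod>y\<in>S - {y0}. 1 + r y)"
    using assms(1) y0(1) by (simp add: prod.remove)
  moreover have "(\<Sum>y\<in>S. r y) = r y0 + (\<Sum>y\<in>S - {y0}. r y)"
    using assms(1) y0(1) by (simp add: sum.remove)
  ultimately show ?thesis using rest by simp
qed simp

lemma same_bucket_close:
  fixes x x' G :: real and N :: nat
  assumes N: "1 \<le> N" and x: "0 \<le> x" "x \<le> G" and x': "0 \<le> x'" "x' \<le> G"
    and bucket: "min (N - 1) (nat \<lfloor>x * real N / G\<rfloor>) = min (N - 1) (nat \<lfloor>x' * real N / G\<rfloor>)"
  shows "\<bar>x - x'\<bar> \<le> G / N"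
proof (cases "G = 0")
  case False
  then have G: "0 < G" using x by linarith
  have scaled: "real (min (N - 1) (nat \<lfloor>z * N / G\<rfloor>)) \<le> z * N / G \<and>
      z * N / G \<le> real (min (N - 1) (nat \<lfloor>z * N / G\<rfloor>)) + 1" if "0 \<le> z" "z \<le> G" for z
  proof -
    have "z * N \<le> G * N" using that by (intro mult_right_mono) auto
    then have "0 \<le> z * N / G" "z * N / G \<le> N" using that G by (auto simp: field_simps)
    then show ?thesis using N by (cases "nat \<lfloor>z * N / G\<rfloor> \<le> N - 1") (auto simp: of_nat_diff, linarith+)
  qed
  have "\<bar>x * N / G - x' * N / G\<bar> \<le> 1"
    using scaled[OF x] scaled[OF x'] bucket by linarith
  then have "\<bar>x - x'\<bar> * (N / G) \<le> 1"
    using G by (simp add: abs_mult flip: diff_divide_distrib left_diff_distrib)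
  then show ?thesis using G N by (simp add: field_simps)
qed (use x x' in simp)

lemma card_same_class_pairs:
  fixes b :: "'a \<Rightarrow> nat"
  assumes "finite U" and b: "\<And>e. e \<in> U \<Longrightarrow> b e < N"
  shows "real (card U) ^ 2
    \<le> real N * (real (card U) + card {p \<in> U \<times> U. fst p \<noteq> snd p \<and> b (fst p) = b (snd p)})"
proof -
  define cls where "cls j = {e \<in> U. b e = j}" for j
  define P where "P = {p \<in> U \<times> U. fst p \<noteq> snd p \<and> b (fst p) = b (snd p)}"
  have fin: "finite (cls j)" for j unfolding cls_def using assms(1) by simp
  have U: "U = (\<Union>j<N. cls j)" unfolding cls_def using b by auto
  have same: "{p \<in> U \<times> U. b (fst p) = b (snd p)} = (\<Union>j<N. cls j \<times> cls j)"
    unfolding cls_def using b by auto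
  have "card U = (\<Sum>j<N. card (cls j))"
    unfolding U using fin by (intro card_UN_disjoint) (auto simp: cls_def)
  then have sum_cls: "real (card U) = (\<Sum>j<N. real (card (cls j)))" by simp
  have "card {p \<in> U \<times> U. b (fst p) = b (snd p)} = (\<Sum>j<N. card (cls j) ^ 2)"
    unfolding same using fin
    by (subst card_UN_disjoint) (auto simp: cls_def card_cartesian_product power2_eq_square)
  moreover have "{p \<in> U \<times> U. b (fst p) = b (snd p)} = P \<union> (\<lambda>e. (e, e)) ` U"
    and "P \<inter> (\<lambda>e. (e, e)) ` U = {}"
    unfolding P_def by auto
  ultimately have "(\<Sum>j<N. card (cls j) ^ 2) = card P + card U"
    using assms(1) by (simp add: card_Un_disjoint P_def card_image inj_on_def)
  from arg_cong[where f = real, OF this]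
  have sum_sq: "(\<Sum>j<N. real (card (cls j)) ^ 2) = real (card P) + real (card U)" by simp
  have "real (card U) ^ 2 \<le> real N * (real (card U) + real (card P))"
    using sum_squared_le_sum_of_squares[of "\<lambda>j. real (card (cls j))" "{..<N}"]
    unfolding sum_cls sum_sq by (simp add: ac_simps)
  then show ?thesis unfolding P_def .
qed

(* Bucket U by the value of g: by Cauchy-Schwarz many ordered pairs share a bucket, and the
   lightest of them weighs at most the average. *)
lemma exists_close_pair_small_weight:
  fixes g :: "'a \<Rightarrow> real" and K :: "'a \<Rightarrow> 'a \<Rightarrow> real"
  assumes U: "finite U" and N: "1 \<le> N" "N < card U"
    and g: "\<And>e. e \<in> U \<Longrightarrow> 0 \<le> g e \<and> g e \<le> G"
    and K: "\<And>e1 e2. 0 \<le> K e1 e2"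
    and Q: "(\<Sum>e1\<in>U. \<Sum>e2\<in>U - {e1}. K e1 e2) \<le> Q"
  shows "\<exists>e1\<in>U. \<exists>e2\<in>U. e1 \<noteq> e2 \<and> \<bar>g e1 - g e2\<bar> \<le> G / N \<and>
    K e1 e2 * (real (card U) ^ 2 - real N * card U) \<le> Q * N"
proof -
  define b where "b e = min (N - 1) (nat \<lfloor>g e * real N / G\<rfloor>)" for e
  define P where "P = {p \<in> U \<times> U. fst p \<noteq> snd p \<and> b (fst p) = b (snd p)}"
  have "finite P" unfolding P_def using U by simp
  have "real (card U) ^ 2 \<le> real N * (real (card U) + card P)"
    unfolding P_def using card_same_class_pairs[OF U, of b N] N(1) by (simp add: b_def)
  then have P_large: "real (card U) ^ 2 - real N * card U \<le> real (card P) * N"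
    by (simp add: algebra_simps)
  moreover have "real N * card U < real (card U) ^ 2"
    using N by (simp add: power2_eq_square mult_strict_right_mono)
  ultimately have "P \<noteq> {}" by auto
  define Kp where "Kp p = K (fst p) (snd p)" for p
  obtain p where p: "p \<in> P" "\<And>q. q \<in> P \<Longrightarrow> Kp p \<le> Kp q"
    using arg_min_if_finite[OF \<open>finite P\<close> \<open>P \<noteq> {}\<close>, of Kp] by (meson not_less)
  have "real (card P) * Kp p \<le> sum Kp P" by (rule sum_bounded_below) (rule p(2))
  also have "\<dots> \<le> (\<Sum>p\<in>(SIGMA e1:U. U - {e1}). Kp p)"
    using U K unfolding P_def Kp_def by (intro sum_mono2) auto
  also have "\<dots> \<le> Q" using U Q by (simp add: Kp_def sum.Sigma split_beta)
  finally have "real N * (real (card P) * Kp p) \<le> real N * Q" by (rule mult_left_mono) simp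
  then have "Kp p * (real (card U) ^ 2 - real N * card U) \<le> Q * N"
    using mult_left_mono[OF P_large, of "Kp p"] K[of "fst p" "snd p"]
    by (simp add: Kp_def algebra_simps)
  moreover have "\<bar>g (fst p) - g (snd p)\<bar> \<le> G / N"
    using p(1) g N(1) unfolding P_def b_def by (intro same_bucket_close) auto
  ultimately show ?thesis
    using p(1) unfolding P_def Kp_def by (intro bexI[of _ "fst p"] bexI[of _ "snd p"]) auto
qed

definition star :: "'a set \<Rightarrow> 'a \<Rightarrow> 'a set set" where
  "star A y = (\<lambda>a. {y, a}) ` A"

lemma mem_common_nbhd_iff_star: "y \<in> common_nbhd V H A \<longleftrightarrow> y \<in> V \<and> y \<notin> A \<and> star A y \<subseteq> H"
  unfolding common_nbhd_def nbhd_def star_def by auto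

lemma simple_graph_edges:
  assumes "simple_graph V E"
  shows "finite E" and "card E \<le> card V * card V"
proof -
  have V: "finite V" using assms unfolding simple_graph_def by simp
  have E: "E \<subseteq> (\<lambda>(u, v). {u, v}) ` (V \<times> V)"
    using assms unfolding simple_graph_def by fastforce
  then show "finite E" using V by (meson finite_SigmaI finite_imageI finite_subset)
  have "card E \<le> card ((\<lambda>(u, v). {u, v}) ` (V \<times> V))" using E V by (intro card_mono) auto
  also have "\<dots> \<le> card (V \<times> V)" by (rule card_image_le) (use V in simp)
  finally show "card E \<le> card V * card V" by (simp add: card_cartesian_product)
qed

lemma common_nbhd_subset: "common_nbhd V H A \<subseteq> V - A"
  unfolding common_nbhd_def by auto

lemma mem_star_unique: "y \<notin> A \<Longrightarrow> y' \<notin> A \<Longrightarrow> e \<in> star A y \<Longrightarrow> e \<in> star A y' \<Longrightarrow> y = y'"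
  unfolding star_def by (auto simp: doubleton_eq_iff)

lemma card_star: "y \<notin> A \<Longrightarrow> card (star A y) = card A"
  unfolding star_def by (intro card_image) (auto simp: inj_on_def doubleton_eq_iff)

(* The relative change of a factor 1 - p / 2 when p drops to 0 (Waiter claims an edge of the
   star) or doubles (Client claims one). *)
definition rho :: "real \<Rightarrow> real" where
  "rho p = (p / 2) / (1 - p / 2)"

lemma rho_nonneg: "0 \<le> p \<Longrightarrow> p \<le> 1 \<Longrightarrow> 0 \<le> rho p"
  unfolding rho_def by auto

lemma rho_le_one_third: "0 \<le> p \<Longrightarrow> p \<le> 1 / 2 \<Longrightarrow> rho p \<le> 1 / 3"
  unfolding rho_def by (auto simp: field_simps)

lemma rho_half_power_mult_le: "rho ((1 / 2) ^ u) * (real u * (real u - 1)) \<le> 1"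
proof -
  define p :: real where "p = (1 / 2) ^ u"
  have p: "0 \<le> p" "p \<le> 1" unfolding p_def by (auto simp: power_le_one)
  have "rho p \<le> p"
    unfolding rho_def using p by (auto simp: field_simps mult_le_cancel_left1 intro: mult_left_le_one_le)
  moreover have "real u * (real u - 1) \<le> 2 ^ u"
  proof -
    have "real (u * (u - 1)) \<le> 2 ^ u"
      using mult_pred_le_two_power[of u] by (metis of_nat_le_iff of_nat_numeral of_nat_power)
    then show ?thesis by (cases u) (simp_all add: algebra_simps)
  qed
  moreover have "0 \<le> real u * (real u - 1)" by (cases u) auto
  ultimately have "rho p * (real u * (real u - 1)) \<le> p * 2 ^ u"
    using p rho_nonneg[OF p] by (intro mult_mono) auto
  also have "p * 2 ^ u = 1" unfolding p_def by (simp add: power_one_over)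
  finally show ?thesis unfolding p_def .
qed

section \<open>The potential\<close>

locale waiter_client_potential =
  fixes V :: "'a set" and t :: nat and Y :: "'a set \<Rightarrow> 'a set" and k :: real
  assumes finite_V: "finite V"
    and Y_subset: "\<And>A. A \<subseteq> V \<Longrightarrow> card A = t \<Longrightarrow> Y A \<subseteq> V - A"
begin

definition tsets :: "'a set set" where
  "tsets = {A. A \<subseteq> V \<and> card A = t}"

(* star_prob is the probability that random play from the position (U, C) completes the star in
   Client's graph, and pot U C A is 2^(k+2) times the expectation of 2^-X under random play, X the
   number of completed stars of A. *)
definition star_prob :: "'a set set \<Rightarrow> 'a set set \<Rightarrow> 'a set \<Rightarrow> 'a \<Rightarrow> real" where
  "star_prob U C A y = (if star A y \<subseteq> U \<union> C then (1 / 2) ^ card (star A y \<inter> U) else 0)"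

definition star_factor :: "'a set set \<Rightarrow> 'a set set \<Rightarrow> 'a set \<Rightarrow> 'a \<Rightarrow> real" where
  "star_factor U C A y = 1 - star_prob U C A y / 2"

definition pot :: "'a set set \<Rightarrow> 'a set set \<Rightarrow> 'a set \<Rightarrow> real" where
  "pot U C A = 2 powr (k + 2) * (\<Prod>y\<in>Y A. star_factor U C A y)"

definition gain :: "'a set set \<Rightarrow> 'a set set \<Rightarrow> 'a set \<Rightarrow> 'a set \<Rightarrow> real" where
  "gain U C A e = (\<Sum>y\<in>Y A. if star A y \<subseteq> U \<union> C \<and> e \<in> star A y
     then pot U C A * rho (star_prob U C A y) else 0)"

definition pair_gain :: "'a set set \<Rightarrow> 'a set set \<Rightarrow> 'a set \<Rightarrow> 'a set \<Rightarrow> 'a set \<Rightarrow> real" where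
  "pair_gain U C A e1 e2 = (\<Sum>y\<in>Y A. if star A y \<subseteq> U \<union> C \<and> e1 \<in> star A y \<and> e2 \<in> star A y
     then pot U C A * rho (star_prob U C A y) else 0)"

definition total_pot :: "'a set set \<Rightarrow> 'a set set \<Rightarrow> real" where
  "total_pot U C = (\<Sum>A\<in>tsets. pot U C A)"

definition total_gain :: "'a set set \<Rightarrow> 'a set set \<Rightarrow> 'a set \<Rightarrow> real" where
  "total_gain U C e = (\<Sum>A\<in>tsets. gain U C A e)"

definition total_pair_gain :: "'a set set \<Rightarrow> 'a set set \<Rightarrow> 'a set \<Rightarrow> 'a set \<Rightarrow> real" where
  "total_pair_gain U C e1 e2 = (\<Sum>A\<in>tsets. pair_gain U C A e1 e2)"

lemma finite_tsets: "finite tsets"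
  unfolding tsets_def using finite_V by (auto intro: finite_subset[of _ "Pow V"])

lemma tsets_Y_subset: "A \<in> tsets \<Longrightarrow> Y A \<subseteq> V - A"
  unfolding tsets_def using Y_subset by auto

lemma finite_Y: "A \<in> tsets \<Longrightarrow> finite (Y A)"
  using tsets_Y_subset finite_V by (meson Diff_subset finite_subset subset_trans)

lemma card_stars_containing_le_one:
  assumes "A \<in> tsets" shows "card {y \<in> Y A. e \<in> star A y} \<le> 1"
proof -
  have "y = y'" if "y \<in> Y A" "y' \<in> Y A" "e \<in> star A y" "e \<in> star A y'" for y y'
    using that tsets_Y_subset[OF assms] by (intro mem_star_unique[of y A y' e]) auto
  then show ?thesis using finite_Y[OF assms] by (auto simp: card_le_Suc0_iff_eq)
qed

lemma star_prob_nonneg: "0 \<le> star_prob U C A y"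
  unfolding star_prob_def by auto

lemma star_prob_le_one: "star_prob U C A y \<le> 1"
  unfolding star_prob_def by (auto simp: power_le_one)

lemma star_factor_ge_half: "1 / 2 \<le> star_factor U C A y"
  using star_prob_le_one[of U C A y] unfolding star_factor_def by auto

lemma rho_star_prob_nonneg: "0 \<le> rho (star_prob U C A y)"
  using rho_nonneg star_prob_nonneg star_prob_le_one by blast

lemma pot_nonneg: "0 \<le> pot U C A"
proof -
  have "0 \<le> star_factor U C A y" for y using star_factor_ge_half[of U C A y] by linarith
  then have "0 \<le> (\<Prod>y\<in>Y A. star_factor U C A y)" by (intro prod_nonneg) auto
  then show ?thesis unfolding pot_def by simp
qed

lemma total_pot_nonneg: "0 \<le> total_pot U C"
  unfolding total_pot_def using pot_nonneg by (auto intro: sum_nonneg)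

lemma star_prob_claim_other:
  assumes "e \<notin> star A y" "e \<in> U"
  shows "star_prob (U - {e}) C A y = star_prob U C A y"
    and "star_prob (U - {e}) (insert e C) A y = star_prob U C A y"
proof -
  have "star A y \<inter> (U - {e}) = star A y \<inter> U"
    and "star A y \<subseteq> U - {e} \<union> C \<longleftrightarrow> star A y \<subseteq> U \<union> C"
    and "star A y \<subseteq> U - {e} \<union> insert e C \<longleftrightarrow> star A y \<subseteq> U \<union> C"
    using assms by auto
  then show "star_prob (U - {e}) C A y = star_prob U C A y"
    and "star_prob (U - {e}) (insert e C) A y = star_prob U C A y"
    unfolding star_prob_def by auto
qed

lemma star_factor_claim_waiter:
  assumes "e \<in> U" "e \<notin> C"
  shows "star_factor (U - {e}) C A y = star_factor U C A y *
    (1 + (if star A y \<subseteq> U \<union> C \<and> e \<in> star A y then rho (star_prob U C A y) else 0))"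
proof (cases "e \<in> star A y")
  case True
  then have "star_prob (U - {e}) C A y = 0" using assms unfolding star_prob_def by auto
  moreover have "star_factor U C A y * (1 + rho (star_prob U C A y)) = 1"
    using star_prob_le_one[of U C A y] unfolding star_factor_def rho_def by (auto simp: field_simps)
  ultimately show ?thesis using True by (auto simp: star_factor_def star_prob_def)
qed (use star_prob_claim_other assms in \<open>simp add: star_factor_def\<close>)

lemma star_factor_claim_client:
  assumes "finite U" "e \<in> U"
  shows "star_factor (U - {e}) (insert e C) A y = star_factor U C A y *
    (1 - (if star A y \<subseteq> U \<union> C \<and> e \<in> star A y then rho (star_prob U C A y) else 0))"
proof (cases "e \<in> star A y \<and> star A y \<subseteq> U \<union> C")
  case True
  moreover have "star A y \<inter> (U - {e}) = star A y \<inter> U - {e}" by auto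
  ultimately have "card (star A y \<inter> U) = Suc (card (star A y \<inter> (U - {e})))"
    using assms True card_Suc_Diff1[of "star A y \<inter> U" e] by simp
  then have "star_prob U C A y = star_prob (U - {e}) (insert e C) A y / 2"
    using True assms unfolding star_prob_def by auto
  moreover have "star_factor U C A y * (1 - rho (star_prob U C A y)) = 1 - star_prob U C A y"
    using star_prob_le_one[of U C A y] unfolding star_factor_def rho_def by (auto simp: field_simps)
  ultimately show ?thesis using True by (simp add: star_factor_def)
next
  case not_alive: False
  show ?thesis
  proof (cases "e \<in> star A y")
    case True
    have "U - {e} \<union> insert e C = U \<union> C" using assms by auto
    with not_alive True show ?thesis by (simp add: star_factor_def star_prob_def)
  qed (use star_prob_claim_other(2) assms in \<open>simp add: star_factor_def\<close>)
qed

lemma pot_change: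
  assumes A: "A \<in> tsets"
    and factor: "\<And>y. y \<in> Y A \<Longrightarrow> star_factor U' C' A y = star_factor U C A y *
      (1 + s * (if star A y \<subseteq> U \<union> C \<and> e \<in> star A y then rho (star_prob U C A y) else 0))"
  shows "pot U' C' A = pot U C A + s * gain U C A e"
proof -
  define r where
    "r y = s * (if star A y \<subseteq> U \<union> C \<and> e \<in> star A y then rho (star_prob U C A y) else 0)" for y
  have "y = y'" if "y \<in> Y A" "y' \<in> Y A" "r y \<noteq> 0" "r y' \<noteq> 0" for y y'
    using that tsets_Y_subset[OF A]
    by (intro mem_star_unique[of y A y' e]) (auto simp: r_def split: if_splits)
  then have "(\<Prod>y\<in>Y A. 1 + r y) = 1 + (\<Sum>y\<in>Y A. r y)"
    using finite_Y[OF A] by (intro prod_one_plus_if_single)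
  moreover have "(\<Prod>y\<in>Y A. star_factor U' C' A y) = (\<Prod>y\<in>Y A. star_factor U C A y) * (\<Prod>y\<in>Y A. 1 + r y)"
    using factor by (simp add: r_def flip: prod.distrib)
  moreover have "s * gain U C A e = pot U C A * (\<Sum>y\<in>Y A. r y)"
    unfolding gain_def r_def by (auto simp: sum_distrib_left intro!: sum.cong)
  ultimately show ?thesis unfolding pot_def by (simp add: algebra_simps)
qed

lemma pot_claim_waiter:
  "A \<in> tsets \<Longrightarrow> e \<in> U \<Longrightarrow> e \<notin> C \<Longrightarrow> pot (U - {e}) C A = pot U C A + gain U C A e"
  using pot_change[of A "U - {e}" C U C 1 e] star_factor_claim_waiter by simp

lemma pot_claim_client:
  "A \<in> tsets \<Longrightarrow> finite U \<Longrightarrow> e \<in> U \<Longrightarrow> pot (U - {e}) (insert e C) A = pot U C A - gain U C A e"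
  using pot_change[of A "U - {e}" "insert e C" U C "-1" e] star_factor_claim_client by simp

lemma gain_nonneg: "0 \<le> gain U C A e"
  unfolding gain_def using pot_nonneg rho_star_prob_nonneg by (auto intro!: sum_nonneg)

lemma pair_gain_nonneg: "0 \<le> pair_gain U C A e1 e2"
  unfolding pair_gain_def using pot_nonneg rho_star_prob_nonneg by (auto intro!: sum_nonneg)

lemma pair_gain_le_gain: "pair_gain U C A e1 e2 \<le> gain U C A e1"
  unfolding pair_gain_def gain_def using pot_nonneg rho_star_prob_nonneg by (auto intro!: sum_mono)

lemma pair_gain_commute: "pair_gain U C A e1 e2 = pair_gain U C A e2 e1"
  unfolding pair_gain_def by (intro sum.cong) auto

lemma gain_after_waiter_claim:
  assumes A: "A \<in> tsets" and "e2 \<in> U" "e2 \<notin> C"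
  shows "gain U C A e1 - pair_gain U C A e1 e2 \<le> gain (U - {e2}) C A e1"
proof -
  have pot_le: "pot U C A \<le> pot (U - {e2}) C A"
    using pot_claim_waiter[OF assms] gain_nonneg by simp
  have "gain U C A e1 - pair_gain U C A e1 e2 = (\<Sum>y\<in>Y A.
      (if star A y \<subseteq> U \<union> C \<and> e1 \<in> star A y \<and> e2 \<notin> star A y then pot U C A * rho (star_prob U C A y) else 0))"
    unfolding gain_def pair_gain_def by (auto simp flip: sum_subtractf intro!: sum.cong)
  also have "\<dots> \<le> gain (U - {e2}) C A e1"
    unfolding gain_def
  proof (rule sum_mono)
    fix y
    show "(if star A y \<subseteq> U \<union> C \<and> e1 \<in> star A y \<and> e2 \<notin> star A y then pot U C A * rho (star_prob U C A y) else 0)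
       \<le> (if star A y \<subseteq> U - {e2} \<union> C \<and> e1 \<in> star A y then pot (U - {e2}) C A * rho (star_prob (U - {e2}) C A y) else 0)"
    proof (cases "e2 \<in> star A y")
      case False
      then have "star_prob (U - {e2}) C A y = star_prob U C A y"
        and "star A y \<subseteq> U - {e2} \<union> C \<longleftrightarrow> star A y \<subseteq> U \<union> C"
        using star_prob_claim_other assms(2) by auto
      then show ?thesis
        using False pot_le rho_star_prob_nonneg[of U C A y] by (auto intro: mult_right_mono)
    qed (use pot_nonneg rho_star_prob_nonneg in auto)
  qed
  finally show ?thesis .
qed

(* Process Waiter's edge e2 first; the interaction of e1 and e2 inside a common star is
   what pair_gain accounts for. *)
lemma pot_offer:
  assumes A: "A \<in> tsets" and "finite U" "e1 \<in> U" "e2 \<in> U" "e1 \<noteq> e2" "e2 \<notin> C"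
  shows "pot (U - {e1, e2}) (insert e1 C) A
    \<le> pot U C A + gain U C A e2 - gain U C A e1 + pair_gain U C A e1 e2"
proof -
  have "U - {e1, e2} = U - {e2} - {e1}" by auto
  then have "pot (U - {e1, e2}) (insert e1 C) A = pot (U - {e2}) C A - gain (U - {e2}) C A e1"
    using assms by (simp add: pot_claim_client)
  also have "\<dots> = pot U C A + gain U C A e2 - gain (U - {e2}) C A e1"
    using pot_claim_waiter[OF A] assms by simp
  finally show ?thesis using gain_after_waiter_claim[OF A assms(4,6), of e1] by simp
qed

lemma total_pot_offer:
  assumes "finite U" "e1 \<in> U" "e2 \<in> U" "e1 \<noteq> e2" "e2 \<notin> C"
  shows "total_pot (U - {e1, e2}) (insert e1 C)
    \<le> total_pot U C + total_gain U C e2 - total_gain U C e1 + total_pair_gain U C e1 e2"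
proof -
  have "total_pot (U - {e1, e2}) (insert e1 C)
      \<le> (\<Sum>A\<in>tsets. pot U C A + gain U C A e2 - gain U C A e1 + pair_gain U C A e1 e2)"
    unfolding total_pot_def using pot_offer assms by (intro sum_mono) auto
  then show ?thesis
    unfolding total_pot_def total_gain_def total_pair_gain_def by (simp add: sum.distrib sum_subtractf)
qed

lemma star_prob_le_half: "finite U \<Longrightarrow> e \<in> U \<Longrightarrow> e \<in> star A y \<Longrightarrow> star_prob U C A y \<le> 1 / 2"
proof -
  assume "finite U" "e \<in> U" "e \<in> star A y"
  then have "1 \<le> card (star A y \<inter> U)" by (auto simp: Suc_le_eq card_gt_0_iff)
  then have "(1 / 2 :: real) ^ card (star A y \<inter> U) \<le> (1 / 2) ^ 1" by (intro power_decreasing) auto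
  then show ?thesis unfolding star_prob_def by auto
qed

lemma gain_le_pot:
  assumes A: "A \<in> tsets" and "finite U" "e \<in> U"
  shows "gain U C A e \<le> pot U C A / 3"
proof -
  have "gain U C A e \<le> (\<Sum>y\<in>Y A. if e \<in> star A y then pot U C A / 3 else 0)"
    unfolding gain_def
  proof (rule sum_mono)
    fix y
    have "rho (star_prob U C A y) \<le> 1 / 3" if "e \<in> star A y"
      using star_prob_le_half[OF assms(2,3) that] star_prob_nonneg by (intro rho_le_one_third)
    then show "(if star A y \<subseteq> U \<union> C \<and> e \<in> star A y then pot U C A * rho (star_prob U C A y) else 0)
        \<le> (if e \<in> star A y then pot U C A / 3 else 0)"
      using pot_nonneg[of U C A] mult_left_mono[of _ "1 / 3" "pot U C A"] by auto
  qed
  also have "\<dots> = card {y \<in> Y A. e \<in> star A y} * (pot U C A / 3)"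
    using finite_Y[OF A] by (simp flip: sum.inter_filter)
  also have "\<dots> \<le> 1 * (pot U C A / 3)"
    using card_stars_containing_le_one[OF A] pot_nonneg[of U C A]
    by (intro mult_right_mono) auto
  finally show ?thesis by simp
qed

lemma total_gain_nonneg: "0 \<le> total_gain U C e"
  unfolding total_gain_def using gain_nonneg by (auto intro: sum_nonneg)

lemma total_gain_le_total_pot: "finite U \<Longrightarrow> e \<in> U \<Longrightarrow> total_gain U C e \<le> total_pot U C / 3"
  unfolding total_gain_def total_pot_def using gain_le_pot
  by (auto intro: sum_mono simp: sum_divide_distrib)

lemma total_pair_gain_nonneg: "0 \<le> total_pair_gain U C e1 e2"
  unfolding total_pair_gain_def using pair_gain_nonneg by (auto intro: sum_nonneg)

lemma total_pair_gain_le_total_gain: "total_pair_gain U C e1 e2 \<le> total_gain U C e1"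
  unfolding total_pair_gain_def total_gain_def using pair_gain_le_gain by (auto intro: sum_mono)

lemma total_pair_gain_commute: "total_pair_gain U C e1 e2 = total_pair_gain U C e2 e1"
  unfolding total_pair_gain_def using pair_gain_commute by simp

section \<open>Choosing Waiter's offer\<close>

(* A live star with u unclaimed edges contributes u (u - 1) ordered pairs, each of weight
   pot * rho (2^-u) <= pot * 2^-u. *)
lemma sum_pairs_in_star_le_pot:
  assumes "finite U"
  shows "(\<Sum>e1\<in>U. \<Sum>e2\<in>U - {e1}. if star A y \<subseteq> U \<union> C \<and> e1 \<in> star A y \<and> e2 \<in> star A y
    then pot U C A * rho (star_prob U C A y) else 0) \<le> pot U C A"
proof (cases "star A y \<subseteq> U \<union> C")
  case True
  define c where "c = pot U C A * rho (star_prob U C A y)"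
  define S where "S = star A y \<inter> U"
  have "finite S" unfolding S_def using assms by auto
  have inner: "(\<Sum>e2\<in>U - {e1}. if e1 \<in> star A y \<and> e2 \<in> star A y then c else 0)
      = (if e1 \<in> S then c * (real (card S) - 1) else 0)" if "e1 \<in> U" for e1
  proof (cases "e1 \<in> star A y")
    case True
    have "(\<Sum>e2\<in>U - {e1}. if e1 \<in> star A y \<and> e2 \<in> star A y then c else 0)
        = c * real (card ((U - {e1}) \<inter> star A y))"
      using True assms by (simp flip: sum.inter_restrict)
    also have "(U - {e1}) \<inter> star A y = S - {e1}" unfolding S_def by auto
    also have "real (card (S - {e1})) = real (card S) - 1"
    proof -
      have "e1 \<in> S" using True that unfolding S_def by simp
      then have "0 < card S" using \<open>finite S\<close> by (auto simp: card_gt_0_iff)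
      with \<open>e1 \<in> S\<close> show ?thesis by (simp add: of_nat_diff)
    qed
    finally show ?thesis using True that unfolding S_def by simp
  qed (simp add: S_def)
  have "(\<Sum>e1\<in>U. \<Sum>e2\<in>U - {e1}. if star A y \<subseteq> U \<union> C \<and> e1 \<in> star A y \<and> e2 \<in> star A y
      then pot U C A * rho (star_prob U C A y) else 0) = (\<Sum>e1\<in>U. if e1 \<in> S then c * (real (card S) - 1) else 0)"
    using True inner unfolding c_def[symmetric] by (intro sum.cong) auto
  also have "\<dots> = real (card S) * (c * (real (card S) - 1))"
  proof -
    have "U \<inter> S = S" unfolding S_def by auto
    then show ?thesis using assms by (simp flip: sum.inter_restrict)
  qed
  also have "\<dots> = pot U C A * (rho (star_prob U C A y) * (real (card S) * (real (card S) - 1)))"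
    unfolding c_def by (simp add: algebra_simps)
  also have "\<dots> \<le> pot U C A * 1"
    using rho_half_power_mult_le[of "card S"] True pot_nonneg
    unfolding star_prob_def S_def by (intro mult_left_mono) auto
  finally show ?thesis by simp
qed (simp add: pot_nonneg)

lemma sum_pair_gain_le:
  assumes A: "A \<in> tsets" and "finite U"
  shows "(\<Sum>e1\<in>U. \<Sum>e2\<in>U - {e1}. pair_gain U C A e1 e2) \<le> real (card V) * pot U C A"
proof -
  have "(\<Sum>e1\<in>U. \<Sum>e2\<in>U - {e1}. pair_gain U C A e1 e2) = (\<Sum>y\<in>Y A. \<Sum>e1\<in>U. \<Sum>e2\<in>U - {e1}.
      if star A y \<subseteq> U \<union> C \<and> e1 \<in> star A y \<and> e2 \<in> star A y then pot U C A * rho (star_prob U C A y) else 0)"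
    unfolding pair_gain_def by (subst sum.swap) (simp add: sum.swap[of _ "Y A"])
  also have "\<dots> \<le> (\<Sum>y\<in>Y A. pot U C A)"
    using sum_pairs_in_star_le_pot[OF assms(2)] by (intro sum_mono) auto
  also have "\<dots> \<le> real (card V) * pot U C A"
  proof -
    have "card (Y A) \<le> card V"
      using tsets_Y_subset[OF A] finite_V by (meson Diff_subset card_mono subset_trans)
    then show ?thesis using pot_nonneg[of U C A] by (simp add: mult_right_mono)
  qed
  finally show ?thesis .
qed

lemma sum_total_pair_gain_le:
  assumes "finite U"
  shows "(\<Sum>e1\<in>U. \<Sum>e2\<in>U - {e1}. total_pair_gain U C e1 e2) \<le> real (card V) * total_pot U C"
proof -
  have "(\<Sum>e1\<in>U. \<Sum>e2\<in>U - {e1}. total_pair_gain U C e1 e2)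
      = (\<Sum>A\<in>tsets. \<Sum>e1\<in>U. \<Sum>e2\<in>U - {e1}. pair_gain U C A e1 e2)"
    unfolding total_pair_gain_def by (subst sum.swap) (simp add: sum.swap[of _ tsets])
  also have "\<dots> \<le> (\<Sum>A\<in>tsets. real (card V) * pot U C A)"
    using sum_pair_gain_le assms by (intro sum_mono) auto
  finally show ?thesis unfolding total_pot_def by (simp add: sum_distrib_left)
qed

lemma total_pot_offer_le:
  assumes "finite U" "e1 \<in> U" "e2 \<in> U" "e1 \<noteq> e2" "U \<inter> C = {}"
    and B: "\<bar>total_gain U C e1 - total_gain U C e2\<bar> + total_pair_gain U C e1 e2 \<le> B"
  shows "total_pot (U - {e1, e2}) (insert e1 C) \<le> total_pot U C + B"
    and "total_pot (U - {e1, e2}) (insert e2 C) \<le> total_pot U C + B"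
proof -
  have "e1 \<notin> C" "e2 \<notin> C" using assms by auto
  have "- (total_gain U C e1 - total_gain U C e2) \<le> \<bar>total_gain U C e1 - total_gain U C e2\<bar>"
    and "total_gain U C e1 - total_gain U C e2 \<le> \<bar>total_gain U C e1 - total_gain U C e2\<bar>"
    by simp_all
  moreover have "total_pot (U - {e1, e2}) (insert e1 C)
      \<le> total_pot U C + total_gain U C e2 - total_gain U C e1 + total_pair_gain U C e1 e2"
    using total_pot_offer assms \<open>e2 \<notin> C\<close> by blast
  moreover have "total_pot (U - {e2, e1}) (insert e2 C)
      \<le> total_pot U C + total_gain U C e1 - total_gain U C e2 + total_pair_gain U C e2 e1"
    using total_pot_offer assms \<open>e1 \<notin> C\<close> by blast
  ultimately show "total_pot (U - {e1, e2}) (insert e1 C) \<le> total_pot U C + B"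
    and "total_pot (U - {e1, e2}) (insert e2 C) \<le> total_pot U C + B"
    using B total_pair_gain_commute[of U C e1 e2] by (simp_all add: insert_commute)
qed

(* Waiter sorts the unclaimed edges into buckets of about bucket_size edges by their
   total_gain; step_loss M bounds the relative increase of total_pot in a round that
   starts with M unclaimed edges. *)
definition bucket_size :: nat where
  "bucket_size = nat \<lceil>sqrt (real (card V))\<rceil> + 2"

definition loss_const :: real where
  "loss_const = real bucket_size + real (card V) / (real bucket_size - 1)"

definition step_loss :: "nat \<Rightarrow> real" where
  "step_loss M = (if M < 2 * bucket_size then 1 else loss_const / real M)"

definition loss_budget :: "nat \<Rightarrow> real" where
  "loss_budget m = real (min m (2 * bucket_size)) + loss_const * ln (real m + 1)"

lemma bucket_size_ge_two: "2 \<le> bucket_size"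
  unfolding bucket_size_def by simp

lemma loss_const_nonneg: "0 \<le> loss_const"
  unfolding loss_const_def using bucket_size_ge_two by auto

lemma exists_offer_few_edges:
  assumes "finite U" "2 \<le> card U"
  shows "\<exists>e1\<in>U. \<exists>e2\<in>U. e1 \<noteq> e2 \<and>
    \<bar>total_gain U C e1 - total_gain U C e2\<bar> + total_pair_gain U C e1 e2 \<le> total_pot U C"
proof -
  have "\<not> card U \<le> Suc 0" using assms(2) by simp
  then obtain e1 e2 where e: "e1 \<in> U" "e2 \<in> U" "e1 \<noteq> e2"
    using card_le_Suc0_iff_eq[OF assms(1)] by blast
  have "\<bar>total_gain U C e1 - total_gain U C e2\<bar> + total_pair_gain U C e1 e2 \<le> total_pot U C"
    using total_gain_le_total_pot[OF assms(1) e(1), of C] total_gain_le_total_pot[OF assms(1) e(2), of C]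
      total_gain_nonneg[of U C e1] total_gain_nonneg[of U C e2]
      total_pair_gain_le_total_gain[of U C e1 e2]
    by (simp add: abs_le_iff)
  with e show ?thesis by blast
qed

lemma exists_offer_many_edges:
  assumes U: "finite U" and M: "2 * bucket_size \<le> card U"
  shows "\<exists>e1\<in>U. \<exists>e2\<in>U. e1 \<noteq> e2 \<and> \<bar>total_gain U C e1 - total_gain U C e2\<bar> + total_pair_gain U C e1 e2
    \<le> total_pot U C * loss_const / card U"
proof -
  define M where "M = card U"
  define N where "N = M div bucket_size"
  define s where "s = real bucket_size"
  define \<Phi> where "\<Phi> = total_pot U C"
  have s: "2 \<le> s" unfolding s_def using bucket_size_ge_two by simp
  have Ns: "N * bucket_size \<le> M" unfolding N_def by simp
  have "M = N * bucket_size + M mod bucket_size" unfolding N_def by simp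
  moreover have "M mod bucket_size < bucket_size" using bucket_size_ge_two by simp
  ultimately have MN: "M < N * bucket_size + bucket_size" by linarith
  have N1: "1 \<le> N" unfolding N_def M_def
    using M bucket_size_ge_two by (simp add: less_eq_div_iff_mult_less_eq)
  have "N * 2 \<le> N * bucket_size" using bucket_size_ge_two by simp
  then have N: "1 \<le> N" "N < M" using Ns N1 by linarith+
  have "bucket_size \<le> N * bucket_size" using N1 by simp
  then have "M \<le> 2 * N * bucket_size" using MN by linarith
  then have "real M \<le> real (2 * N * bucket_size)" by (simp only: of_nat_le_iff)
  moreover have "real (N * bucket_size) \<le> real M" using Ns by (simp only: of_nat_le_iff)
  ultimately have NM: "real N * s \<le> M" "real M \<le> 2 * real N * s" unfolding s_def by simp_all
  have "\<exists>e1\<in>U. \<exists>e2\<in>U. e1 \<noteq> e2 \<and> \<bar>total_gain U C e1 - total_gain U C e2\<bar> \<le> (\<Phi> / 3) / N \<and>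
      total_pair_gain U C e1 e2 * (real M ^ 2 - real N * M) \<le> (real (card V) * \<Phi>) * N"
    unfolding M_def
  proof (rule exists_close_pair_small_weight[OF U N(1) N(2)[unfolded M_def]])
    show "0 \<le> total_gain U C e \<and> total_gain U C e \<le> \<Phi> / 3" if "e \<in> U" for e
      unfolding \<Phi>_def using total_gain_nonneg total_gain_le_total_pot[OF U that] by blast
    show "(\<Sum>e1\<in>U. \<Sum>e2\<in>U - {e1}. total_pair_gain U C e1 e2) \<le> real (card V) * \<Phi>"
      unfolding \<Phi>_def by (rule sum_total_pair_gain_le[OF U])
  qed (rule total_pair_gain_nonneg)
  then obtain e1 e2 where e: "e1 \<in> U" "e2 \<in> U" "e1 \<noteq> e2"
    and g: "\<bar>total_gain U C e1 - total_gain U C e2\<bar> \<le> (\<Phi> / 3) / N"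
    and K: "total_pair_gain U C e1 e2 * (real M ^ 2 - real N * M) \<le> (real (card V) * \<Phi>) * N"
    by blast
  have "0 \<le> \<Phi>" unfolding \<Phi>_def by (rule total_pot_nonneg)
  have pos: "0 < real N" "0 < real M" using N by simp_all
  have "\<Phi> * M \<le> \<Phi> * (3 * N * s)"
    using NM \<open>0 \<le> \<Phi>\<close> s by (intro mult_left_mono) auto
  then have "(\<Phi> / 3) / N \<le> \<Phi> * s / M" using pos by (simp add: field_simps)
  moreover have "total_pair_gain U C e1 e2 \<le> real (card V) * \<Phi> / ((s - 1) * M)"
  proof -
    have "real M * (real N * (s - 1)) \<le> real M ^ 2 - real N * M"
      using mult_left_mono[OF NM(1), of "real M"] by (simp add: power2_eq_square algebra_simps)
    then have "total_pair_gain U C e1 e2 * (real M * (s - 1)) * N \<le> (real (card V) * \<Phi>) * N"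
      using K total_pair_gain_nonneg[of U C e1 e2]
      by (smt (verit) mult.assoc mult.commute mult_left_mono)
    then have "total_pair_gain U C e1 e2 * (real M * (s - 1)) \<le> real (card V) * \<Phi>"
      using pos(1) by (rule mult_right_le_imp_le)
    then show ?thesis using pos s by (simp add: field_simps)
  qed
  ultimately have "\<bar>total_gain U C e1 - total_gain U C e2\<bar> + total_pair_gain U C e1 e2
      \<le> \<Phi> * s / M + real (card V) * \<Phi> / ((s - 1) * M)"
    using g by linarith
  also have "\<dots> = total_pot U C * loss_const / card U"
    using s N unfolding loss_const_def s_def \<Phi>_def M_def by (simp add: field_simps)
  finally show ?thesis using e by blast
qed

lemma exists_good_offer:
  assumes "finite U" "2 \<le> card U" "U \<inter> C = {}"
  shows "\<exists>e1\<in>U. \<exists>e2\<in>U. e1 \<noteq> e2 \<and>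
    total_pot (U - {e1, e2}) (insert e1 C) \<le> total_pot U C * (1 + step_loss (card U)) \<and>
    total_pot (U - {e1, e2}) (insert e2 C) \<le> total_pot U C * (1 + step_loss (card U))"
proof -
  obtain e1 e2 where e: "e1 \<in> U" "e2 \<in> U" "e1 \<noteq> e2"
    and B: "\<bar>total_gain U C e1 - total_gain U C e2\<bar> + total_pair_gain U C e1 e2
      \<le> total_pot U C * step_loss (card U)"
    using exists_offer_few_edges[OF assms(1,2), of C] exists_offer_many_edges[OF assms(1), of C]
    unfolding step_loss_def by (cases "card U < 2 * bucket_size") auto
  from total_pot_offer_le[OF assms(1) e assms(3) B] e show ?thesis
    by (auto simp: algebra_simps)
qed

section \<open>Start and end of the game\<close>

lemma loss_budget_nonneg: "0 \<le> loss_budget m"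
  unfolding loss_budget_def using loss_const_nonneg by auto

lemma step_loss_nonneg: "0 \<le> step_loss m"
  unfolding step_loss_def using loss_const_nonneg by auto

lemma loss_budget_step:
  assumes "2 \<le> m" shows "loss_budget (m - 2) + step_loss m \<le> loss_budget m"
proof -
  have m: "real (m - 2) = real m - 2" using assms by (simp add: of_nat_diff)
  have "ln (real m - 1) \<le> ln (real m + 1)" using assms by auto
  then have ln_mono: "loss_const * ln (real m - 1) \<le> loss_const * ln (real m + 1)"
    using loss_const_nonneg by (rule mult_left_mono)
  show ?thesis
  proof (cases "m < 2 * bucket_size")
    case True
    then show ?thesis unfolding loss_budget_def step_loss_def using ln_mono m by (simp add: algebra_simps)
  next
    case False
    then have "4 \<le> real m" using bucket_size_ge_two by linarith
    have "ln ((real m - 1) / (real m + 1)) \<le> (real m - 1) / (real m + 1) - 1"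
      using \<open>4 \<le> real m\<close> by (intro ln_le_minus_one) auto
    then have "ln (real m - 1) - ln (real m + 1) \<le> -2 / (real m + 1)"
      using \<open>4 \<le> real m\<close> by (simp add: ln_div field_simps)
    moreover have "1 / real m \<le> 2 / (real m + 1)" using \<open>4 \<le> real m\<close> by (simp add: field_simps)
    ultimately have "1 / real m \<le> ln (real m + 1) - ln (real m - 1)" by linarith
    then have "loss_const / real m \<le> loss_const * (ln (real m + 1) - ln (real m - 1))"
      using loss_const_nonneg by (metis mult_left_mono times_divide_eq_right mult.right_neutral)
    moreover have "real (min (m - 2) (2 * bucket_size)) \<le> real (min m (2 * bucket_size))" by simp
    ultimately show ?thesis unfolding loss_budget_def step_loss_def using False m by (simp add: algebra_simps)
  qed
qed

(* With at most one edge left, every star not yet inside C either has lost an edge to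
   Waiter or contains the last edge, so at most one factor 1/2 is not paid for by C. *)
lemma pot_at_end_ge:
  assumes U: "finite U" "card U \<le> 1" and A: "A \<in> tsets"
  shows "2 powr (k + 1 - card {y \<in> Y A. star A y \<subseteq> C}) \<le> pot U C A"
proof -
  define F where "F = {y \<in> Y A. star A y \<subseteq> C}"
  define L where "L = {y \<in> Y A. star A y \<subseteq> U \<union> C}"
  obtain e0 where "U \<subseteq> {e0}"
    using U by (metis card_0_eq card_1_singletonE empty_subsetI le_Suc_eq One_nat_def le_zero_eq order_refl)
  then have "L \<subseteq> F \<union> {y \<in> Y A. e0 \<in> star A y}" unfolding L_def F_def by auto
  then have "card L \<le> card (F \<union> {y \<in> Y A. e0 \<in> star A y})"
    using finite_Y[OF A] by (intro card_mono) (auto simp: F_def)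
  also have "\<dots> \<le> card F + card {y \<in> Y A. e0 \<in> star A y}" by (rule card_Un_le)
  finally have "card L \<le> card F + 1" using card_stars_containing_le_one[OF A, of e0] by linarith
  then have "(1 / 2) ^ (card F + 1) \<le> (1 / 2 :: real) ^ card L" by (intro power_decreasing) auto
  also have "(1 / 2) ^ card L = (\<Prod>y\<in>Y A. if y \<in> L then 1 / 2 else 1 :: real)"
  proof -
    have "Y A \<inter> L = L" unfolding L_def by auto
    then show ?thesis using finite_Y[OF A] by (simp add: prod.If_cases)
  qed
  also have "\<dots> \<le> (\<Prod>y\<in>Y A. star_factor U C A y)"
  proof (rule prod_mono)
    fix y assume "y \<in> Y A"
    then show "0 \<le> (if y \<in> L then 1 / 2 else 1 :: real) \<and> (if y \<in> L then 1 / 2 else 1) \<le> star_factor U C A y"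
      using star_factor_ge_half[of U C A y] by (auto simp: L_def star_factor_def star_prob_def)
  qed
  finally have "(1 / 2) ^ (card F + 1) \<le> (\<Prod>y\<in>Y A. star_factor U C A y)" .
  then have "2 powr (k + 2) * (1 / 2) ^ (card F + 1) \<le> pot U C A"
    unfolding pot_def by (intro mult_left_mono) auto
  moreover have "2 powr (k + 2) * (1 / 2) ^ (card F + 1) = 2 powr (k + 1 - card F)"
    by (simp add: powr_diff powr_add powr_realpow power_one_over field_simps)
  ultimately show ?thesis unfolding F_def by simp
qed

lemma target_if_total_pot_le_one:
  assumes "finite U" "card U \<le> 1" "total_pot U C \<le> 1" "A \<in> tsets"
  shows "k \<le> real (card (common_nbhd V C A \<inter> Y A))"
proof -
  define F where "F = {y \<in> Y A. star A y \<subseteq> C}"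
  have "2 powr (k + 1 - card F) \<le> pot U C A"
    unfolding F_def by (rule pot_at_end_ge[OF assms(1,2,4)])
  also have "\<dots> \<le> total_pot U C"
    unfolding total_pot_def using finite_tsets assms(4) pot_nonneg by (intro member_le_sum) auto
  finally have "2 powr (k + 1 - card F) \<le> 2 powr 0" using assms(3) by simp
  then have "k + 1 - card F \<le> 0" by (subst (asm) powr_le_cancel_iff) auto
  moreover have "F \<subseteq> common_nbhd V C A \<inter> Y A"
    using tsets_Y_subset[OF assms(4)] unfolding F_def by (auto simp: mem_common_nbhd_iff_star)
  then have "card F \<le> card (common_nbhd V C A \<inter> Y A)"
    using finite_Y[OF assms(4)] by (intro card_mono) auto
  ultimately show ?thesis by linarith
qed

lemma waiter_wins_if_total_pot_small:
  assumes "finite U" "U \<inter> C = {}" "total_pot U C \<le> exp (- loss_budget (card U))"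
  shows "waiter_wins (\<lambda>C. \<forall>A. A \<subseteq> V \<and> card A = t \<longrightarrow> k \<le> real (card (common_nbhd V C A \<inter> Y A))) U C"
proof (rule waiter_wins_invariant[where I = "\<lambda>U C. U \<inter> C = {} \<and> total_pot U C \<le> exp (- loss_budget (card U))"])
  fix U C assume I: "U \<inter> C = {} \<and> total_pot U C \<le> exp (- loss_budget (card U))"
    and U: "finite U" "2 \<le> card U"
  obtain e1 e2 where e: "e1 \<in> U" "e2 \<in> U" "e1 \<noteq> e2"
    and "total_pot (U - {e1, e2}) (insert e1 C) \<le> total_pot U C * (1 + step_loss (card U))"
    and "total_pot (U - {e1, e2}) (insert e2 C) \<le> total_pot U C * (1 + step_loss (card U))"
    using exists_good_offer[OF U] I by blast
  moreover have "card (U - {e1, e2}) = card U - 2" using e U by (simp add: card_Diff_subset)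
  moreover have "total_pot U C * (1 + step_loss (card U)) \<le> exp (- loss_budget (card U - 2))"
  proof -
    have "total_pot U C * (1 + step_loss (card U)) \<le> exp (- loss_budget (card U)) * exp (step_loss (card U))"
      using I total_pot_nonneg step_loss_nonneg by (intro mult_mono) (auto simp: add.commute)
    also have "\<dots> \<le> exp (- loss_budget (card U - 2))"
      using loss_budget_step[OF U(2)] by (simp flip: exp_add)
    finally show ?thesis .
  qed
  ultimately show "\<exists>e1\<in>U. \<exists>e2\<in>U. e1 \<noteq> e2 \<and>
      ((U - {e1, e2}) \<inter> insert e1 C = {} \<and>
        total_pot (U - {e1, e2}) (insert e1 C) \<le> exp (- loss_budget (card (U - {e1, e2})))) \<and>
      ((U - {e1, e2}) \<inter> insert e2 C = {} \<and>
        total_pot (U - {e1, e2}) (insert e2 C) \<le> exp (- loss_budget (card (U - {e1, e2}))))"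
    using I by (intro bexI[OF _ e(1)] bexI[OF _ e(2)]) auto
next
  fix U C assume I: "U \<inter> C = {} \<and> total_pot U C \<le> exp (- loss_budget (card U))"
    and U: "finite U" "card U \<le> 1"
  have "exp (- loss_budget (card U)) \<le> 1" using loss_budget_nonneg by simp
  then have "total_pot U C \<le> 1" using I by linarith
  then show "\<forall>A. A \<subseteq> V \<and> card A = t \<longrightarrow> k \<le> real (card (common_nbhd V C A \<inter> Y A))"
    using target_if_total_pot_le_one[OF U] unfolding tsets_def by blast
qed (use assms in auto)

lemma pot_initial_le:
  assumes A: "A \<in> tsets" and E: "\<And>y. y \<in> Y A \<Longrightarrow> star A y \<subseteq> E"
    and b: "b \<le> real (card (Y A))"
  shows "pot E {} A \<le> 2 powr (k + 2) * exp (- ((1 / 2) ^ (t + 1) * b))"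
proof -
  define q :: real where "q = (1 / 2) ^ (t + 1)"
  have q: "0 \<le> q" "q \<le> 1" unfolding q_def by (simp, rule power_le_one) auto
  have "star_factor E {} A y = 1 - q" if "y \<in> Y A" for y
  proof -
    have "y \<notin> A" using tsets_Y_subset[OF A] that by auto
    then have "card (star A y \<inter> E) = t"
      using E[OF that] A card_star[of y A] by (simp add: Int_absorb2 tsets_def)
    then show ?thesis unfolding star_factor_def star_prob_def q_def using E[OF that] by simp
  qed
  then have "(\<Prod>y\<in>Y A. star_factor E {} A y) = (1 - q) ^ card (Y A)" by simp
  also have "\<dots> \<le> exp (- q) ^ card (Y A)"
    using q by (intro power_mono) (auto simp: exp_ge_add_one_self[of "-q", simplified])
  also have "\<dots> = exp (- q * real (card (Y A)))" by (simp add: exp_of_nat_mult[symmetric] mult.commute)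
  also have "\<dots> \<le> exp (- q * b)" using b q by (simp add: mult_left_mono)
  finally show ?thesis unfolding pot_def q_def by (intro mult_left_mono) auto
qed

lemma card_tsets_le: "card tsets \<le> card V ^ t"
proof -
  have "card tsets = card V choose t" unfolding tsets_def using n_subsets[OF finite_V] by simp
  also have "\<dots> \<le> card V ^ t" by (cases "t \<le> card V") (auto simp: binomial_le_pow binomial_eq_0)
  finally show ?thesis .
qed

lemma total_pot_initial_le:
  assumes "\<And>A y. A \<in> tsets \<Longrightarrow> y \<in> Y A \<Longrightarrow> star A y \<subseteq> E"
    and "\<And>A. A \<in> tsets \<Longrightarrow> b \<le> real (card (Y A))"
  shows "total_pot E {} \<le> real (card V ^ t) * 2 powr (k + 2) * exp (- ((1 / 2) ^ (t + 1) * b))"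
proof -
  have "total_pot E {} \<le> (\<Sum>A\<in>tsets. 2 powr (k + 2) * exp (- ((1 / 2) ^ (t + 1) * b)))"
    unfolding total_pot_def using pot_initial_le assms by (intro sum_mono) auto
  also have "\<dots> \<le> real (card V ^ t) * (2 powr (k + 2) * exp (- ((1 / 2) ^ (t + 1) * b)))"
    using card_tsets_le by (simp add: mult_right_mono del: of_nat_power)
  finally show ?thesis by (simp add: mult.assoc)
qed

lemma loss_budget_le:
  assumes "m \<le> card V * card V"
  shows "loss_budget m \<le> 2 * sqrt (card V) + 6 + (2 * sqrt (card V) + 3) * ln (real (card V) * card V + 1)"
proof -
  define x where "x = sqrt (real (card V))"
  have x: "0 \<le> x" "real (card V) = x * x" unfolding x_def by simp_all
  have s: "real bucket_size \<le> x + 3" "x + 1 \<le> real bucket_size - 1"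
    unfolding bucket_size_def x_def by (auto simp: of_nat_nat) linarith+
  have "real (card V) / (real bucket_size - 1) \<le> real (card V) / (x + 1)"
    using s(2) x by (intro divide_left_mono) auto
  also have "\<dots> \<le> x" using x by (simp add: field_simps)
  finally have "loss_const \<le> 2 * x + 3" unfolding loss_const_def using s(1) by linarith
  moreover have "ln (real m + 1) \<le> ln (real (card V) * card V + 1)"
    using assms by (simp flip: of_nat_mult)
  ultimately have "loss_const * ln (real m + 1) \<le> (2 * x + 3) * ln (real (card V) * card V + 1)"
    using loss_const_nonneg by (intro mult_mono) auto
  moreover have "real (min m (2 * bucket_size)) \<le> 2 * x + 6" using s(1) by linarith
  ultimately show ?thesis unfolding loss_budget_def x_def by linarith
qed

lemma waiter_wins_if_initial_pot_small:
  assumes "finite E" and E: "\<And>A y. A \<in> tsets \<Longrightarrow> y \<in> Y A \<Longrightarrow> star A y \<subseteq> E"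
    and "card E \<le> card V * card V"
    and b: "\<And>A. A \<in> tsets \<Longrightarrow> b \<le> real (card (Y A))"
    and small: "real (card V ^ t) * 2 powr (k + 2) * exp (- ((1 / 2) ^ (t + 1) * b))
      \<le> exp (- (2 * sqrt (card V) + 6 + (2 * sqrt (card V) + 3) * ln (real (card V) * card V + 1)))"
  shows "waiter_wins (\<lambda>C. \<forall>A. A \<subseteq> V \<and> card A = t \<longrightarrow> k \<le> real (card (common_nbhd V C A \<inter> Y A))) E {}"
proof (rule waiter_wins_if_total_pot_small)
  have "exp (- (2 * sqrt (card V) + 6 + (2 * sqrt (card V) + 3) * ln (real (card V) * card V + 1)))
      \<le> exp (- loss_budget (card E))"
    using loss_budget_le[OF assms(3)] by simp
  then show "total_pot E {} \<le> exp (- loss_budget (card E))"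
    using total_pot_initial_le[OF E b] small by linarith
qed (use assms in auto)

end

section \<open>Asymptotics\<close>

(* The exponent of initial_pot_bound without its main term, after bounding t ln n by
   0.1 (ln n)^2 / ln 2. *)
definition lower_order_terms :: "real \<Rightarrow> real" where
  "lower_order_terms x = 0.1 * (ln x)\<^sup>2 / ln 2 + 8 + 2 * sqrt x + (2 * sqrt x + 3) * ln (x * x + 1)"

lemma eventually_lower_order_terms_le:
  assumes "0 < c"
  shows "eventually (\<lambda>n. lower_order_terms (real n) \<le> c * real n powr 0.9) sequentially"
proof -
  have "((\<lambda>x. lower_order_terms x / x powr 0.9) \<longlongrightarrow> 0) at_top"
    unfolding lower_order_terms_def by real_asymp
  then have "eventually (\<lambda>x. lower_order_terms x / x powr 0.9 < c) at_top"
    using assms by (rule order_tendstoD(2))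
  with eventually_gt_at_top[of 0] have "eventually (\<lambda>x. lower_order_terms x \<le> c * x powr 0.9) at_top"
    by eventually_elim (auto simp: field_simps)
  then show ?thesis by (rule eventually_compose_filterlim[OF _ filterlim_real_sequentially])
qed

lemma initial_pot_bound:
  fixes \<beta> :: real and n t :: nat
  assumes \<beta>: "0 < \<beta>" and n: "2 \<le> n" and t: "real t \<le> 0.1 * log 2 (real n)"
    and lower: "lower_order_terms (real n) \<le> 99 / 200 * \<beta> * real n powr 0.9"
  shows "real (n ^ t) * 2 powr (\<beta> * real n / 200 ^ (t + 1) + 2) * exp (- ((1 / 2) ^ (t + 1) * (\<beta> * real n)))
    \<le> exp (- (2 * sqrt n + 6 + (2 * sqrt n + 3) * ln (real n * n + 1)))"
proof -
  define x where "x = real n"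
  define q :: real where "q = (1 / 2) ^ (t + 1)"
  define k where "k = \<beta> * x / 200 ^ (t + 1)"
  have x: "2 \<le> x" unfolding x_def using n by simp
  have "real t * ln x \<le> 0.1 * (ln x)\<^sup>2 / ln 2"
  proof -
    have "real t * ln x \<le> (0.1 * log 2 x) * ln x" using t x unfolding x_def by (intro mult_right_mono) auto
    then show ?thesis by (simp add: log_def power2_eq_square)
  qed
  moreover have "k \<le> q * (\<beta> * x) / 100"
  proof -
    have "(100::real) * 2 ^ (t + 1) \<le> 100 ^ (t + 1) * 2 ^ (t + 1)"
      by (intro mult_right_mono) (auto simp: one_le_power)
    also have "\<dots> = 200 ^ (t + 1)" by (simp flip: power_mult_distrib)
    finally have "\<beta> * x / 200 ^ (t + 1) \<le> \<beta> * x / (100 * 2 ^ (t + 1))"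
      using \<beta> x by (intro divide_left_mono) auto
    then show ?thesis unfolding k_def q_def by (simp add: power_one_over)
  qed
  moreover have "0 \<le> k" unfolding k_def using \<beta> x by simp
  then have "(k + 2) * ln 2 \<le> k + 2" using ln_2_less_1 by (intro mult_left_le) auto
  moreover have "\<beta> / 2 * x powr 0.9 \<le> q * (\<beta> * x)"
  proof -
    have "(2::real) ^ t = 2 powr real t" by (simp add: powr_realpow)
    also have "\<dots> \<le> 2 powr (0.1 * log 2 x)" using t unfolding x_def by (intro powr_mono) auto
    also have "\<dots> = (2 powr log 2 x) powr 0.1" by (simp add: powr_powr mult.commute)
    also have "\<dots> = x powr 0.1" using x by simp
    finally have "(2::real) ^ t \<le> x powr 0.1" .
    have "x = x powr 0.1 * x powr 0.9" using x by (simp flip: powr_add)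
    then have "\<beta> / 2 * x powr 0.9 = \<beta> * x / (2 * x powr 0.1)" using x by (simp add: field_simps)
    also have "\<dots> \<le> \<beta> * x / (2 * 2 ^ t)"
      using \<open>2 ^ t \<le> x powr 0.1\<close> \<beta> x by (intro divide_left_mono) auto
    also have "\<dots> = q * (\<beta> * x)" unfolding q_def by (simp add: power_one_over)
    finally show ?thesis .
  qed
  ultimately have "real t * ln x + (k + 2) * ln 2 - q * (\<beta> * x)
      \<le> - (2 * sqrt x + 6 + (2 * sqrt x + 3) * ln (x * x + 1))"
    using lower unfolding lower_order_terms_def x_def[symmetric] by linarith
  moreover have "real (n ^ t) * 2 powr (k + 2) * exp (- (q * (\<beta> * x)))
      = exp (real t * ln x + (k + 2) * ln 2 - q * (\<beta> * x))"
    using x unfolding x_def by (simp add: powr_def exp_add exp_diff exp_of_nat_mult exp_minus divide_inverse)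
  ultimately show ?thesis unfolding k_def q_def x_def by simp
qed

lemma waiter_wins_common_nbhd:
  fixes \<beta> :: real and n t :: nat and V :: "'a set"
  assumes \<beta>: "0 < \<beta>" and n: "2 \<le> n" and t: "real t \<le> 0.1 * log 2 (real n)"
    and lower: "lower_order_terms (real n) \<le> 99 / 200 * \<beta> * real n powr 0.9"
    and G: "simple_graph V E" and V: "card V = n"
    and Y: "\<forall>A. A \<subseteq> V \<and> card A = t \<longrightarrow> Y A \<subseteq> common_nbhd V E A \<and> \<beta> * real n \<le> real (card (Y A))"
  shows "waiter_wins (\<lambda>C. \<forall>A. A \<subseteq> V \<and> card A = t \<longrightarrow>
    \<beta> * real n / 200 ^ (t + 1) \<le> real (card (common_nbhd V C A \<inter> Y A))) E {}"
proof -
  have "finite V" using G unfolding simple_graph_def by (rule conjunct1)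
  moreover have "Y A \<subseteq> V - A" if "A \<subseteq> V" "card A = t" for A
  proof -
    have "Y A \<subseteq> common_nbhd V E A" using Y that by blast
    then show ?thesis using common_nbhd_subset by (rule subset_trans)
  qed
  ultimately interpret waiter_client_potential V t Y "\<beta> * real n / 200 ^ (t + 1)"
    by unfold_locales
  show ?thesis
  proof (rule waiter_wins_if_initial_pot_small[where b = "\<beta> * real n"])
    show "star A y \<subseteq> E" if "A \<in> tsets" "y \<in> Y A" for A y
    proof -
      have "y \<in> common_nbhd V E A" using Y that unfolding tsets_def by blast
      then show ?thesis by (simp add: mem_common_nbhd_iff_star)
    qed
    show "real (card V ^ t) * 2 powr (\<beta> * real n / 200 ^ (t + 1) + 2) * exp (- ((1 / 2) ^ (t + 1) * (\<beta> * real n)))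
      \<le> exp (- (2 * sqrt (card V) + 6 + (2 * sqrt (card V) + 3) * ln (real (card V) * card V + 1)))"
      using initial_pot_bound[OF \<beta> n t lower] unfolding V .
  qed (use Y simple_graph_edges[OF G] in \<open>auto simp: tsets_def\<close>)
qed

theorem lemma6p2:
  fixes \<beta> :: real
  assumes "0 < \<beta>" and "\<beta> < 1"
  shows "\<exists>n0::nat. \<forall>n\<ge>n0. \<forall>t::nat. real t \<le> 0.1 * log 2 (real n) \<longrightarrow>
           (\<forall>(V::nat set) (E::nat set set) (Y::nat set \<Rightarrow> nat set).
              simple_graph V E \<and> card V = n \<and>
              (\<forall>A. A \<subseteq> V \<and> card A = t \<longrightarrow>
                   Y A \<subseteq> common_nbhd V E A \<and> real (card (Y A)) \<ge> \<beta> * real n)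
            \<longrightarrow> waiter_wins
                  (\<lambda>C. \<forall>A. A \<subseteq> V \<and> card A = t \<longrightarrow>
                     real (card (common_nbhd V C A \<inter> Y A)) \<ge> \<beta> * real n / 200 ^ (t + 1))
                  E {})"
proof -
  have "eventually (\<lambda>n. lower_order_terms (real n) \<le> 99 / 200 * \<beta> * real n powr 0.9 \<and> 2 \<le> n) sequentially"
    using eventually_lower_order_terms_le[of "99 / 200 * \<beta>"] assms(1) eventually_ge_at_top[of 2]
    by (auto intro: eventually_conj)
  then obtain n0 where
    n0: "\<And>n. n0 \<le> n \<Longrightarrow> lower_order_terms (real n) \<le> 99 / 200 * \<beta> * real n powr 0.9 \<and> 2 \<le> n"
    unfolding eventually_sequentially by blast
  show ?thesis
    using n0 by (intro exI[of _ n0] allI impI; elim conjE; intro waiter_wins_common_nbhd[OF assms(1)]) auto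
qed

end
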